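(* Consider the delayed online learning protocol described in the context, and assume that delayed dual averaging (DDA) is run with a non-increasing sequence of learning rates $(\eta_t)_{t\in\{1,\dots,T\}}$, $\eta_t>0$. Then for every $p\in\mathcal X$ the generated points $x_1,\dots,x_T$ satisfy \[ R_T(p)\le \frac{h(p)}{\eta_T}+\frac12\sum_{t=1}^T \eta_t\Big(\|g_t\|_*^2+2\|g_t\|_*\sum_{s\in\mathcal U_t}\|g_s\|_*\Big). \]
   Context: Let $\mathcal V$ be a finite-dimensional real vector space with norm $\|\cdot\|$ and dual norm $\|\cdot\|_*$, and let $\mathcal X\subset\mathcal V$ be closed and convex. A regularizer is a function $h:\mathcal V\to\mathbb R\cup\{+\infty\}$ that is lower semicontinuous, $1$-strongly convex with respect to $\|\cdot\|$ on $\mathcal X$, satisfies $\mathcal X\subset\operatorname{dom}h$, whose subdifferential admits a continuous selection, and which is nonnegative ($h\ge0$). Protocol: there are one or several agents; at each round $t=1,\dots,T$ exactly one agent $i(t)$ is active, plays $x_t\in\mathcal X$ and incurs $f_t(x_t)$, where $f_t:\mathcal V\to\mathbb R\cup\{+\infty\}$ is convex with $\mathcal X\subset\operatorname{dom}\partial f_t$; a subgradient $g_t\in\partial f_t(x_t)$ is revealed at some later moment (possibly at different times to different agents). For an agent $i$ and time $t$, $\mathcal S^i_t\subset\{1,\dots,t-1\}$ is the set of timestamps $s$ such that $g_s$ is available to agent $i$ at time $t$, with $\mathcal S^i_t\subset\mathcal S^i_{t+1}$. Set $\mathcal S_t=\mathcal S^{i(t)}_t$ and $\mathcal U_t=\{1,\dots,t-1\}\setminus\mathcal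 S_t$. DDA: $x_t=\arg\min_{x\in\mathcal X}\big\{\sum_{s\in\mathcal S_t}\langle g_s,x\rangle+h(x)/\eta_t\big\}$. Regret: $R_T(p)=\sum_{t=1}^Tf_t(x_t)-\sum_{t=1}^Tf_t(p)$. *)

theory Defs
  imports "HOL-Analysis.Analysis"
begin

text \<open>The finite-dimensional real vector space V is modelled by a type of class
euclidean_space; its (arbitrary) norm is a function N; the pairing of a
gradient g with a point x is the inner product g \<bullet> x (identifying V* with V).
Extended-real-valued functions V \<rightarrow> R \<union> {+\<infinity>} are functions into ereal that
never take the value -\<infinity>.\<close>

definition is_norm :: "('a::real_vector \<Rightarrow> real) \<Rightarrow> bool" where
  "is_norm N \<longleftrightarrow> (\<forall>x. N x \<ge> 0) \<and> (\<forall>x. N x = 0 \<longleftrightarrow> x = 0)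
     \<and> (\<forall>c x. N (c *\<^sub>R x) = \<bar>c\<bar> * N x) \<and> (\<forall>x y. N (x + y) \<le> N x + N y)"

definition dual_norm :: "('a::real_inner \<Rightarrow> real) \<Rightarrow> 'a \<Rightarrow> real" where
  "dual_norm N g = Sup {g \<bullet> x | x. N x \<le> 1}"

definition ext_valued :: "('a \<Rightarrow> ereal) \<Rightarrow> bool" where
  "ext_valued f \<longleftrightarrow> (\<forall>x. f x \<noteq> -\<infinity>)"

definition edom :: "('a \<Rightarrow> ereal) \<Rightarrow> 'a set" where
  "edom f = {x. f x < \<infinity>}"

definition lower_semicont :: "('a::topological_space \<Rightarrow> ereal) \<Rightarrow> bool" where
  "lower_semicont f \<longleftrightarrow> (\<forall>x. f x \<le> Liminf (at x) f)"

definition econvex :: "('a::real_vector \<Rightarrow> ereal) \<Rightarrow> bool" where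
  "econvex f \<longleftrightarrow> (\<forall>x y u. 0 \<le> u \<and> u \<le> 1 \<longrightarrow>
      f (u *\<^sub>R x + (1 - u) *\<^sub>R y) \<le> ereal u * f x + ereal (1 - u) * f y)"

definition strongly_convex_on :: "'a set \<Rightarrow> ('a::real_vector \<Rightarrow> real) \<Rightarrow> ('a \<Rightarrow> ereal) \<Rightarrow> bool" where
  "strongly_convex_on X N f \<longleftrightarrow> (\<forall>x\<in>X. \<forall>y\<in>X. \<forall>u. 0 \<le> u \<and> u \<le> 1 \<longrightarrow>
      f (u *\<^sub>R x + (1 - u) *\<^sub>R y)
        \<le> ereal u * f x + ereal (1 - u) * f y - ereal (u * (1 - u) / 2 * (N (x - y))\<^sup>2))"

definition subdiff :: "('a::real_inner \<Rightarrow> ereal) \<Rightarrow> 'a \<Rightarrow> 'a set" where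
  "subdiff f x = {g. \<bar>f x\<bar> \<noteq> \<infinity> \<and> (\<forall>y. f x + ereal (g \<bullet> (y - x)) \<le> f y)}"

definition regularizer :: "'a set \<Rightarrow> ('a::euclidean_space \<Rightarrow> real) \<Rightarrow> ('a \<Rightarrow> ereal) \<Rightarrow> bool" where
  "regularizer X N h \<longleftrightarrow> ext_valued h \<and> lower_semicont h \<and> strongly_convex_on X N h
     \<and> X \<subseteq> edom h
     \<and> (\<exists>s. continuous_on {x. subdiff h x \<noteq> {}} s \<and> (\<forall>x. subdiff h x \<noteq> {} \<longrightarrow> s x \<in> subdiff h x))
     \<and> (\<forall>x. h x \<ge> 0)"

end

theory Submission
  imports Defs
begin

text \<open>Let y t be the leader of undelayed dual averaging, the minimiser over X of
  \<open>(\<Sum>s<t. g s) \<bullet> y + h y / \<eta> t\<close>; it exists because this objective is strongly convex and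
  lower semicontinuous on the closed set X. By convexity the regret is at most
  \<open>\<Sum>t. g t \<bullet> (x t - y t) + \<Sum>t. g t \<bullet> (y t - p)\<close>. The second sum is the regret of undelayed
  dual averaging, at most \<open>h p / \<eta> T + \<Sum>t. \<eta> t * \<parallel>g t\<parallel>\<^sub>*\<^sup>2 / 2\<close> by the usual potential
  argument. In the first, x t and y t minimise \<open>1 / \<eta> t\<close>-strongly convex objectives whose linear
  parts differ by the gradients not yet available at time t, and perturbing such an objective by a
  linear form a moves its minimiser by at most \<open>\<eta> t * \<parallel>a\<parallel>\<^sub>*\<close>.\<close>

section \<open>Norms and dual norms\<close>

lemma is_normD:
  assumes "is_norm N"
  shows "N x \<ge> 0" "N x = 0 \<longleftrightarrow> x = 0" "N (c *\<^sub>R x) = \<bar>c\<bar> * N x" "N (x + y) \<le> N x + N y"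
  using assms unfolding is_norm_def by auto

lemma is_norm_minus_commute:
  assumes "is_norm N"
  shows "N (x - y) = N (y - x)"
  using is_normD(3)[OF assms, of "-1" "x - y"] by simp

lemma is_norm_convex_on:
  assumes "is_norm N"
  shows "convex_on UNIV N"
proof (rule convex_onI)
  fix t :: real and x y assume "0 < t" "t < 1"
  then show "N ((1 - t) *\<^sub>R x + t *\<^sub>R y) \<le> (1 - t) * N x + t * N y"
    using is_normD(3,4)[OF assms] by (metis abs_of_nonneg less_eq_real_def diff_ge_0_iff_ge)
qed simp

lemma is_norm_continuous_on:
  fixes N :: "'a::euclidean_space \<Rightarrow> real"
  assumes "is_norm N"
  shows "continuous_on S N"
  using convex_on_continuous[OF open_UNIV is_norm_convex_on[OF assms]] continuous_on_subset by blast

lemma is_norm_ge_norm: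
  fixes N :: "'a::euclidean_space \<Rightarrow> real"
  assumes "is_norm N"
  obtains c where "c > 0" "\<And>x. c * norm x \<le> N x"
proof -
  obtain b :: 'a where "b \<in> Basis" using nonempty_Basis by blast
  then have "sphere (0::'a) 1 \<noteq> {}" by (auto simp: norm_Basis)
  then obtain x0 where x0: "x0 \<in> sphere 0 1" "\<And>y. y \<in> sphere 0 1 \<Longrightarrow> N x0 \<le> N y"
    using continuous_attains_inf[OF compact_sphere _ is_norm_continuous_on[OF assms]] by blast
  have "N x0 * norm x \<le> N x" for x
  proof (cases "x = 0")
    case True then show ?thesis using is_normD(1)[OF assms] by simp
  next
    case False
    have "N x0 \<le> N (inverse (norm x) *\<^sub>R x)" using x0(2) False by simp
    also have "\<dots> = inverse (norm x) * N x" using is_normD(3)[OF assms] by simp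
    finally show ?thesis using False by (simp add: field_simps)
  qed
  moreover have "N x0 > 0" using x0(1) is_normD(1,2)[OF assms, of x0] by auto
  ultimately show ?thesis using that by blast
qed

lemma
  fixes N :: "'a::euclidean_space \<Rightarrow> real"
  assumes "is_norm N"
  shows dual_norm_inner_le: "g \<bullet> w \<le> dual_norm N g * N w"
    and dual_norm_nonneg: "dual_norm N g \<ge> 0"
proof -
  obtain c where c: "c > 0" "\<And>x. c * norm x \<le> N x" using is_norm_ge_norm[OF assms] by blast
  have "bdd_above {g \<bullet> x | x. N x \<le> 1}"
  proof (rule bdd_aboveI)
    fix y assume "y \<in> {g \<bullet> x | x. N x \<le> 1}"
    then obtain x where x: "y = g \<bullet> x" "N x \<le> 1" by blast
    have "y \<le> norm g * norm x" using x(1) norm_cauchy_schwarz by blast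
    also have "\<dots> \<le> norm g * (1 / c)"
      using c x(2) order_trans[OF c(2)[of x]] by (intro mult_left_mono) (auto simp: field_simps)
    finally show "y \<le> norm g / c" by simp
  qed
  then have unit: "g \<bullet> x \<le> dual_norm N g" if "N x \<le> 1" for x
    unfolding dual_norm_def using that by (intro cSup_upper) blast+
  show "dual_norm N g \<ge> 0" using unit[of 0] is_normD(2)[OF assms, of 0] by simp
  show "g \<bullet> w \<le> dual_norm N g * N w"
  proof (cases "w = 0")
    case True then show ?thesis using is_normD(2)[OF assms, of 0] by simp
  next
    case False
    then have Nw: "N w > 0" using is_normD(1,2)[OF assms, of w] by auto
    then have "N (inverse (N w) *\<^sub>R w) = 1" using is_normD(3)[OF assms] by simp
    then have "g \<bullet> (inverse (N w) *\<^sub>R w) \<le> dual_norm N g" by (rule unit[OF eq_refl])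
    then have "inverse (N w) * (g \<bullet> w) \<le> dual_norm N g" by simp
    then show ?thesis using Nw by (simp add: field_simps)
  qed
qed

lemma dual_norm_zero:
  fixes N :: "'a::real_inner \<Rightarrow> real"
  assumes "is_norm N"
  shows "dual_norm N 0 = 0"
proof -
  have "N 0 \<le> 1" using is_normD(2)[OF assms, of 0] by simp
  then have "{0 \<bullet> x | x::'a. N x \<le> 1} = {0}" by auto
  then show ?thesis unfolding dual_norm_def by simp
qed

lemma dual_norm_add_le:
  fixes N :: "'a::euclidean_space \<Rightarrow> real"
  assumes "is_norm N"
  shows "dual_norm N (a + b) \<le> dual_norm N a + dual_norm N b"
  unfolding dual_norm_def[of N "a + b"]
proof (rule cSup_least)
  have "N 0 \<le> 1" using is_normD(2)[OF assms, of 0] by simp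
  then show "{(a + b) \<bullet> x | x. N x \<le> 1} \<noteq> {}" by blast
next
  fix r assume "r \<in> {(a + b) \<bullet> x | x. N x \<le> 1}"
  then obtain x where r: "r = a \<bullet> x + b \<bullet> x" and x: "N x \<le> 1" by (auto simp: inner_add_left)
  have "c \<bullet> x \<le> dual_norm N c" for c
    using dual_norm_inner_le[OF assms, of c x] mult_left_le[OF x dual_norm_nonneg[OF assms, of c]]
    by linarith
  then show "r \<le> dual_norm N a + dual_norm N b" unfolding r by (intro add_mono)
qed

lemma dual_norm_sum_le:
  fixes N :: "'a::euclidean_space \<Rightarrow> real"
  assumes "is_norm N"
  shows "dual_norm N (\<Sum>s\<in>A. g s) \<le> (\<Sum>s\<in>A. dual_norm N (g s))"
proof (induction A rule: infinite_finite_induct)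
  case (insert a A)
  then show ?case using dual_norm_add_le[OF assms, of "g a" "sum g A"] by simp
qed (simp_all add: dual_norm_zero[OF assms])

section \<open>Strongly convex functions\<close>

definition strongly_convex_real_on :: "'a set \<Rightarrow> ('a::real_vector \<Rightarrow> real) \<Rightarrow> real \<Rightarrow> ('a \<Rightarrow> real) \<Rightarrow> bool" where
  "strongly_convex_real_on X N \<mu> F \<longleftrightarrow> (\<forall>x\<in>X. \<forall>y\<in>X. \<forall>u. 0 \<le> u \<and> u \<le> 1 \<longrightarrow>
      F (u *\<^sub>R x + (1 - u) *\<^sub>R y) \<le> u * F x + (1 - u) * F y - \<mu> / 2 * u * (1 - u) * (N (x - y))\<^sup>2)"

lemma strongly_convex_real_onD:
  assumes "strongly_convex_real_on X N \<mu> F" "x \<in> X" "y \<in> X" "0 \<le> u" "u \<le> 1"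
  shows "F (u *\<^sub>R x + (1 - u) *\<^sub>R y) \<le> u * F x + (1 - u) * F y - \<mu> / 2 * u * (1 - u) * (N (x - y))\<^sup>2"
  using assms unfolding strongly_convex_real_on_def by blast

lemma strongly_convex_real_on_add_inner:
  assumes "strongly_convex_real_on X N \<mu> F"
  shows "strongly_convex_real_on X N \<mu> (\<lambda>w. a \<bullet> w + F w)"
  using strongly_convex_real_onD[OF assms]
  unfolding strongly_convex_real_on_def by (auto simp: inner_add_right algebra_simps)

lemma strongly_convex_real_on_divide:
  assumes "strongly_convex_real_on X N \<mu> F" "c > 0"
  shows "strongly_convex_real_on X N (\<mu> / c) (\<lambda>w. F w / c)"
  unfolding strongly_convex_real_on_def
proof (intro ballI allI impI)
  fix x y and u :: real assume "x \<in> X" "y \<in> X" "0 \<le> u \<and> u \<le> 1"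
  then have "F (u *\<^sub>R x + (1 - u) *\<^sub>R y) / c
      \<le> (u * F x + (1 - u) * F y - \<mu> / 2 * u * (1 - u) * (N (x - y))\<^sup>2) / c"
    using strongly_convex_real_onD[OF assms(1)] assms(2) by (simp add: divide_right_mono)
  then show "F (u *\<^sub>R x + (1 - u) *\<^sub>R y) / c
      \<le> u * (F x / c) + (1 - u) * (F y / c) - \<mu> / c / 2 * u * (1 - u) * (N (x - y))\<^sup>2"
    by (simp add: diff_divide_distrib add_divide_distrib)
qed

text \<open>Compare with the points of the segment towards z and let them tend to the minimiser.\<close>
lemma strongly_convex_arg_min_growth:
  assumes X: "convex X" and F: "strongly_convex_real_on X N \<mu> F" "\<mu> \<ge> 0"
    and y: "is_arg_min F (\<lambda>w. w \<in> X) y" and z: "z \<in> X"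
  shows "F y + \<mu> / 2 * (N (z - y))\<^sup>2 \<le> F z"
proof (rule field_le_epsilon)
  fix e :: real assume "e > 0"
  define Q where "Q = \<mu> / 2 * (N (z - y))\<^sup>2"
  define u where "u = min 1 (e / (Q + 1))"
  have Q: "Q \<ge> 0" using F(2) by (simp add: Q_def)
  have u: "0 < u" "u \<le> 1" using \<open>e > 0\<close> Q by (auto simp: u_def)
  have "u * Q \<le> e / (Q + 1) * Q" using Q by (intro mult_right_mono) (auto simp: u_def)
  also have "\<dots> \<le> e" using \<open>e > 0\<close> Q by (simp add: field_simps)
  finally have uQ: "u * Q \<le> e" .
  have yX: "y \<in> X" and ymin: "\<And>w. w \<in> X \<Longrightarrow> F y \<le> F w"
    using y by (auto simp: is_arg_min_linorder)
  have "F y \<le> F (u *\<^sub>R z + (1 - u) *\<^sub>R y)"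
    using u convexD[OF X z yX, of u "1 - u"] by (intro ymin) auto
  also have "\<dots> \<le> u * F z + (1 - u) * F y - u * (1 - u) * Q"
    using strongly_convex_real_onD[OF F(1) z yX, of u] u by (simp add: Q_def algebra_simps)
  finally have "u * (F y + Q) \<le> u * (F z + u * Q)" by (simp add: algebra_simps)
  then have "F y + Q \<le> F z + u * Q" using u by simp
  then show "F y + \<mu> / 2 * (N (z - y))\<^sup>2 \<le> F z + e" using uQ by (simp add: Q_def)
qed

lemma strongly_convex_arg_min_perturb_lower:
  fixes N :: "'a::euclidean_space \<Rightarrow> real"
  assumes N: "is_norm N" and X: "convex X" and F: "strongly_convex_real_on X N \<mu> F" "\<mu> > 0"
    and x: "is_arg_min F (\<lambda>w. w \<in> X) x" and w: "w \<in> X"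
  shows "a \<bullet> x + F x - (dual_norm N a)\<^sup>2 / (2 * \<mu>) \<le> a \<bullet> w + F w"
proof -
  define r where "r = N (w - x)"
  define K where "K = dual_norm N a"
  have growth: "F x + \<mu> / 2 * r\<^sup>2 \<le> F w"
    unfolding r_def using strongly_convex_arg_min_growth[OF X F(1) _ x w] F(2) by simp
  have "a \<bullet> (x - w) \<le> K * r"
    unfolding K_def r_def using dual_norm_inner_le[OF N] is_norm_minus_commute[OF N] by metis
  moreover have "0 \<le> (\<mu> * r - K)\<^sup>2 / (2 * \<mu>)" using F(2) by simp
  moreover have "(\<mu> * r - K)\<^sup>2 / (2 * \<mu>) = \<mu> / 2 * r\<^sup>2 - K * r + K\<^sup>2 / (2 * \<mu>)"
    using F(2) by (simp add: power2_eq_square field_simps)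
  ultimately show ?thesis using growth unfolding K_def[symmetric] by (simp add: inner_diff_right)
qed

lemma strongly_convex_arg_min_perturb_dist:
  fixes N :: "'a::euclidean_space \<Rightarrow> real"
  assumes N: "is_norm N" and X: "convex X" and F: "strongly_convex_real_on X N \<mu> F" "\<mu> > 0"
    and x: "is_arg_min F (\<lambda>w. w \<in> X) x" and y: "is_arg_min (\<lambda>w. a \<bullet> w + F w) (\<lambda>w. w \<in> X) y"
  shows "N (x - y) \<le> dual_norm N a / \<mu>"
proof -
  have "x \<in> X" "y \<in> X" using x y by (auto simp: is_arg_min_def)
  have "F x + \<mu> / 2 * (N (y - x))\<^sup>2 \<le> F y"
    using strongly_convex_arg_min_growth[OF X F(1) _ x \<open>y \<in> X\<close>] F(2) by simp
  moreover have "a \<bullet> y + F y + \<mu> / 2 * (N (x - y))\<^sup>2 \<le> a \<bullet> x + F x"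
    using strongly_convex_arg_min_growth[OF X strongly_convex_real_on_add_inner[OF F(1)] _ y \<open>x \<in> X\<close>] F(2)
    by simp
  ultimately have "\<mu> * (N (x - y))\<^sup>2 \<le> a \<bullet> (x - y)"
    using is_norm_minus_commute[OF N, of x y] by (simp add: inner_diff_right)
  also have "\<dots> \<le> dual_norm N a * N (x - y)" by (rule dual_norm_inner_le[OF N])
  finally have "(\<mu> * N (x - y)) * N (x - y) \<le> dual_norm N a * N (x - y)"
    by (simp add: power2_eq_square mult.assoc)
  then have "\<mu> * N (x - y) \<le> dual_norm N a"
    using dual_norm_nonneg[OF N, of a] is_normD(1)[OF N, of "x - y"] F(2)
    by (cases "N (x - y) = 0") (auto simp: mult_le_cancel_right)
  then show ?thesis using F(2) by (simp add: field_simps)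
qed

definition lower_semicontinuous_on :: "'a::topological_space set \<Rightarrow> ('a \<Rightarrow> real) \<Rightarrow> bool" where
  "lower_semicontinuous_on X F \<longleftrightarrow> (\<forall>z\<in>X. \<forall>r < F z. \<forall>\<^sub>F y in at z within X. r < F y)"

lemma lower_semicontinuous_on_add_continuous:
  assumes c: "continuous_on X c" and F: "lower_semicontinuous_on X F"
  shows "lower_semicontinuous_on X (\<lambda>w. c w + F w)"
  unfolding lower_semicontinuous_on_def
proof (intro ballI allI impI)
  fix z r assume z: "z \<in> X" and r: "r < c z + F z"
  define e where "e = (c z + F z - r) / 2"
  have "e > 0" using r by (simp add: e_def)
  have "\<forall>\<^sub>F y in at z within X. dist (c y) (c z) < e"
    using c z \<open>e > 0\<close> unfolding continuous_on_def by (auto intro: tendstoD)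
  moreover have "\<forall>\<^sub>F y in at z within X. F z - e < F y"
    using F z \<open>e > 0\<close> unfolding lower_semicontinuous_on_def by simp
  ultimately show "\<forall>\<^sub>F y in at z within X. r < c y + F y"
  proof eventually_elim
    case (elim y)
    then have "c z - c y < e" unfolding dist_real_def abs_less_iff by linarith
    moreover have "r = c z + F z - 2 * e" by (simp add: e_def field_simps)
    ultimately show ?case using elim(2) by linarith
  qed
qed

lemma lower_semicontinuous_on_divide:
  assumes F: "lower_semicontinuous_on X F" and "c > 0"
  shows "lower_semicontinuous_on X (\<lambda>w. F w / c)"
  unfolding lower_semicontinuous_on_def
proof (intro ballI allI impI)
  fix z r assume "z \<in> X" "r < F z / c"
  then have "\<forall>\<^sub>F y in at z within X. r * c < F y"
    using F \<open>c > 0\<close> unfolding lower_semicontinuous_on_def by (simp add: pos_less_divide_eq)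
  then show "\<forall>\<^sub>F y in at z within X. r < F y / c"
    by eventually_elim (use \<open>c > 0\<close> in \<open>simp add: pos_less_divide_eq\<close>)
qed

text \<open>Strong convexity at the midpoint bounds the distance of two points of a minimising
  sequence by the excesses of their values over the infimum.\<close>
lemma strongly_convex_minimizing_seq_Cauchy:
  fixes N :: "'a::euclidean_space \<Rightarrow> real"
  assumes N: "is_norm N" and X: "convex X" and F: "strongly_convex_real_on X N \<mu> F" "\<mu> > 0"
    and z: "\<And>k. z k \<in> X" and lower: "\<And>w. w \<in> X \<Longrightarrow> m \<le> F w" and lim: "(\<lambda>k. F (z k)) \<longlonglongrightarrow> m"
  shows "Cauchy z"
  unfolding Cauchy_def
proof (intro allI impI)
  fix e :: real assume "e > 0"
  obtain c where c: "c > 0" "\<And>x. c * norm x \<le> N x" using is_norm_ge_norm[OF N] by blast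
  define \<delta> where "\<delta> = \<mu> * (c * e)\<^sup>2 / 8"
  have "\<delta> > 0" using \<open>e > 0\<close> c(1) F(2) by (simp add: \<delta>_def)
  then obtain M where M: "\<And>k. k \<ge> M \<Longrightarrow> F (z k) - m < \<delta>"
    using lim unfolding LIMSEQ_def dist_real_def by (meson abs_less_iff)
  have "dist (z j) (z k) < e" if "j \<ge> M" "k \<ge> M" for j k
  proof -
    have "m \<le> F ((1/2) *\<^sub>R z j + (1 - 1/2) *\<^sub>R z k)"
      by (rule lower) (use convexD[OF X z z] in simp)
    also have "\<dots> \<le> (1/2) * F (z j) + (1 - 1/2) * F (z k) - \<mu> / 2 * (1/2) * (1 - 1/2) * (N (z j - z k))\<^sup>2"
      by (rule strongly_convex_real_onD[OF F(1) z z]) simp_all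
    finally have "\<mu> * (N (z j - z k))\<^sup>2 < \<mu> * (c * e)\<^sup>2"
      using M[OF that(1)] M[OF that(2)] by (simp add: \<delta>_def field_simps)
    then have "(c * norm (z j - z k))\<^sup>2 < (c * e)\<^sup>2"
      using F(2) c order_le_less_trans[OF power_mono[OF c(2)]] by simp
    then have "c * norm (z j - z k) < c * e"
      using \<open>e > 0\<close> c(1) by (simp add: power_less_imp_less_base)
    then show ?thesis using c(1) by (simp add: dist_norm)
  qed
  then show "\<exists>M. \<forall>j\<ge>M. \<forall>k\<ge>M. dist (z j) (z k) < e" by blast
qed

lemma strongly_convex_attains_arg_min:
  fixes N :: "'a::euclidean_space \<Rightarrow> real"
  assumes N: "is_norm N" and X: "convex X" "closed X" "X \<noteq> {}"
    and F: "strongly_convex_real_on X N \<mu> F" "\<mu> > 0" "lower_semicontinuous_on X F" "bdd_below (F ` X)"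
  obtains y where "is_arg_min F (\<lambda>w. w \<in> X) y"
proof -
  define m where "m = Inf (F ` X)"
  have lower: "m \<le> F w" if "w \<in> X" for w unfolding m_def using F(4) that by (simp add: cInf_lower)
  have "\<exists>z\<in>X. F z < m + inverse (real (Suc k))" for k
    using cInf_lessD[of "F ` X" "m + inverse (real (Suc k))"] X(3) unfolding m_def by auto
  then obtain z where z: "\<And>k. z k \<in> X" "\<And>k. F (z k) < m + inverse (real (Suc k))" by metis
  have Fz: "(\<lambda>k. F (z k)) \<longlonglongrightarrow> m"
  proof (rule tendsto_sandwich)
    show "\<forall>\<^sub>F k in sequentially. m \<le> F (z k)" using lower z(1) by simp
    show "\<forall>\<^sub>F k in sequentially. F (z k) \<le> m + inverse (real (Suc k))"
      using z(2) by (intro always_eventually allI less_imp_le)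
    show "(\<lambda>k. m + inverse (real (Suc k))) \<longlonglongrightarrow> m"
      using tendsto_add[OF tendsto_const LIMSEQ_inverse_real_of_nat, of m] by simp
  qed simp
  obtain z0 where lim: "z \<longlonglongrightarrow> z0"
    using strongly_convex_minimizing_seq_Cauchy[OF N X(1) F(1,2) z(1) lower Fz]
    by (auto simp: Cauchy_convergent_iff convergent_def)
  have z0: "z0 \<in> X" using closed_sequentially[OF X(2)] z(1) lim by blast
  have "F z0 \<le> m"
  proof (rule dense_le)
    fix r assume "r < F z0"
    moreover have "\<forall>\<^sub>F y in at z0 within X. r < F y"
      using F(3) z0 \<open>r < F z0\<close> unfolding lower_semicontinuous_on_def by blast
    ultimately have "\<forall>\<^sub>F y in nhds z0. y \<in> X \<longrightarrow> r < F y"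
      unfolding eventually_at_filter by (auto elim: eventually_mono)
    from eventually_compose_filterlim[OF this lim]
    have "\<forall>\<^sub>F k in sequentially. r < F (z k)" using z(1) by simp
    then show "r \<le> m" using Fz by (intro tendsto_lowerbound) (auto elim: eventually_mono)
  qed
  then have "is_arg_min F (\<lambda>w. w \<in> X) z0"
    using z0 lower by (auto simp: is_arg_min_linorder intro: order_trans)
  then show ?thesis by (rule that)
qed

lemma strongly_convex_arg_min_perturb_exists:
  fixes N :: "'a::euclidean_space \<Rightarrow> real"
  assumes N: "is_norm N" and X: "convex X" "closed X"
    and F: "strongly_convex_real_on X N \<mu> F" "\<mu> > 0" "lower_semicontinuous_on X F"
    and x: "is_arg_min F (\<lambda>w. w \<in> X) x"
  obtains y where "is_arg_min (\<lambda>w. a \<bullet> w + F w) (\<lambda>w. w \<in> X) y"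
proof (rule strongly_convex_attains_arg_min[OF N X _ strongly_convex_real_on_add_inner[OF F(1)] F(2)])
  show "X \<noteq> {}" using x by (auto simp: is_arg_min_def)
  show "lower_semicontinuous_on X (\<lambda>w. a \<bullet> w + F w)"
    by (rule lower_semicontinuous_on_add_continuous[OF _ F(3)]) (intro continuous_intros)
  show "bdd_below ((\<lambda>w. a \<bullet> w + F w) ` X)"
    using strongly_convex_arg_min_perturb_lower[OF N X(1) F(1,2) x] by (rule bdd_belowI2)
qed

section \<open>Dual averaging\<close>

definition dual_averaging_objective :: "'a::real_inner \<Rightarrow> ('a \<Rightarrow> real) \<Rightarrow> real \<Rightarrow> 'a \<Rightarrow> real" where
  "dual_averaging_objective G H \<eta> w = G \<bullet> w + H w / \<eta>"

lemma dual_averaging_objective_add_inner: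
  "(\<lambda>w. a \<bullet> w + dual_averaging_objective G H \<eta> w) = dual_averaging_objective (a + G) H \<eta>"
  by (auto simp: dual_averaging_objective_def inner_add_left)

lemma strongly_convex_dual_averaging_objective:
  assumes "strongly_convex_real_on X N 1 H" "\<eta> > 0"
  shows "strongly_convex_real_on X N (1 / \<eta>) (dual_averaging_objective G H \<eta>)"
  using strongly_convex_real_on_add_inner[OF strongly_convex_real_on_divide[OF assms]]
  unfolding dual_averaging_objective_def by simp

lemma lower_semicontinuous_dual_averaging_objective:
  assumes "lower_semicontinuous_on X H" "\<eta> > 0"
  shows "lower_semicontinuous_on X (dual_averaging_objective G H \<eta>)"
  using lower_semicontinuous_on_add_continuous[OF _ lower_semicontinuous_on_divide[OF assms]]
  unfolding dual_averaging_objective_def by (simp add: continuous_intros)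

text \<open>The potential of undelayed dual averaging is the minimal value of its objective; each round
  raises it by at least the loss of the current leader minus the price of one gradient step.\<close>
lemma dual_averaging_regret:
  fixes N :: "'a::euclidean_space \<Rightarrow> real" and g y :: "nat \<Rightarrow> 'a"
  assumes N: "is_norm N" and X: "convex X"
    and H: "strongly_convex_real_on X N 1 H" "\<And>w. w \<in> X \<Longrightarrow> 0 \<le> H w"
    and e_pos: "\<And>t. t \<in> {1..Suc T} \<Longrightarrow> 0 < e t" and e_mono: "\<And>t. t \<in> {1..T} \<Longrightarrow> e (Suc t) \<le> e t"
    and y: "\<And>t. t \<in> {1..Suc T} \<Longrightarrow>
      is_arg_min (dual_averaging_objective (\<Sum>s=1..<t. g s) H (e t)) (\<lambda>w. w \<in> X) (y t)"
    and p: "p \<in> X"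
  shows "(\<Sum>t=1..T. g t \<bullet> (y t - p)) \<le> H p / e (Suc T) + (\<Sum>t=1..T. e t * (dual_norm N (g t))\<^sup>2 / 2)"
proof -
  define G where "G t = (\<Sum>s=1..<t. g s)" for t
  define \<Phi> where "\<Phi> t = dual_averaging_objective (G t) H (e t) (y t)" for t
  have yX: "y t \<in> X" if "t \<in> {1..Suc T}" for t using y[OF that] by (simp add: is_arg_min_def)
  have step: "g t \<bullet> y t - e t * (dual_norm N (g t))\<^sup>2 / 2 \<le> \<Phi> (Suc t) - \<Phi> t" if t: "t \<in> {1..T}" for t
  proof -
    have t': "t \<in> {1..Suc T}" "Suc t \<in> {1..Suc T}" using t by auto
    have "g t \<bullet> y t + \<Phi> t - (dual_norm N (g t))\<^sup>2 / (2 * (1 / e t))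
        \<le> g t \<bullet> y (Suc t) + dual_averaging_objective (G t) H (e t) (y (Suc t))"
      unfolding \<Phi>_def G_def
      by (rule strongly_convex_arg_min_perturb_lower[OF N X
            strongly_convex_dual_averaging_objective[OF H(1) e_pos[OF t'(1)]] _ y[OF t'(1)] yX[OF t'(2)]])
        (use e_pos[OF t'(1)] in simp)
    also have "\<dots> \<le> \<Phi> (Suc t)"
    proof -
      have "H (y (Suc t)) / e t \<le> H (y (Suc t)) / e (Suc t)"
        using H(2)[OF yX[OF t'(2)]] e_pos[OF t'(2)] e_mono[OF t] by (intro divide_left_mono) auto
      moreover have "G (Suc t) = g t + G t" using t by (simp add: G_def sum.atLeastLessThan_Suc)
      ultimately show ?thesis by (simp add: \<Phi>_def dual_averaging_objective_def inner_add_left)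
    qed
    finally show ?thesis by (simp add: algebra_simps)
  qed
  have "(\<Sum>t=1..T. g t \<bullet> y t - e t * (dual_norm N (g t))\<^sup>2 / 2) \<le> (\<Sum>t=1..T. \<Phi> (Suc t) - \<Phi> t)"
    by (rule sum_mono) (rule step)
  also have "\<dots> = \<Phi> (Suc T) - \<Phi> 1" by (rule sum_Suc_diff) simp
  also have "\<dots> \<le> (\<Sum>t=1..T. g t \<bullet> p) + H p / e (Suc T)"
  proof -
    have "\<Phi> 1 \<ge> 0"
      using H(2)[OF yX, of 1] e_pos[of 1] by (simp add: \<Phi>_def G_def dual_averaging_objective_def)
    moreover have "\<Phi> (Suc T) \<le> dual_averaging_objective (G (Suc T)) H (e (Suc T)) p"
      using y[of "Suc T"] p by (simp add: \<Phi>_def G_def is_arg_min_linorder)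
    ultimately show ?thesis
      by (simp add: G_def dual_averaging_objective_def inner_sum_left atLeastLessThanSuc_atLeastAtMost)
  qed
  finally show ?thesis by (simp add: inner_diff_right sum_subtractf)
qed

lemma dual_averaging_arg_min_delay_dist:
  fixes N :: "'a::euclidean_space \<Rightarrow> real" and g :: "nat \<Rightarrow> 'a"
  assumes N: "is_norm N" and X: "convex X" and H: "strongly_convex_real_on X N 1 H" and "\<eta> > 0"
    and "finite A" "S \<subseteq> A"
    and x: "is_arg_min (dual_averaging_objective (\<Sum>s\<in>S. g s) H \<eta>) (\<lambda>w. w \<in> X) x"
    and y: "is_arg_min (dual_averaging_objective (\<Sum>s\<in>A. g s) H \<eta>) (\<lambda>w. w \<in> X) y"
  shows "N (x - y) \<le> \<eta> * (\<Sum>s\<in>A - S. dual_norm N (g s))"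
proof -
  have "(\<Sum>s\<in>A. g s) = (\<Sum>s\<in>A - S. g s) + (\<Sum>s\<in>S. g s)"
    using \<open>finite A\<close> \<open>S \<subseteq> A\<close> by (simp add: sum.subset_diff)
  with y have "is_arg_min (\<lambda>w. (\<Sum>s\<in>A - S. g s) \<bullet> w + dual_averaging_objective (\<Sum>s\<in>S. g s) H \<eta> w)
      (\<lambda>w. w \<in> X) y"
    by (simp add: dual_averaging_objective_add_inner)
  then have "N (x - y) \<le> dual_norm N (\<Sum>s\<in>A - S. g s) / (1 / \<eta>)"
    using strongly_convex_arg_min_perturb_dist[OF N X
        strongly_convex_dual_averaging_objective[OF H \<open>\<eta> > 0\<close>] _ x] \<open>\<eta> > 0\<close> by simp
  also have "\<dots> \<le> \<eta> * (\<Sum>s\<in>A - S. dual_norm N (g s))"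
    using dual_norm_sum_le[OF N, of g "A - S"] \<open>\<eta> > 0\<close> by simp
  finally show ?thesis .
qed

text \<open>Compare the delayed iterates x t with the leaders y t of undelayed dual averaging, run with
  the same rates (frozen at the last one after round T): the leaders have the usual regret, and
  x t differs from y t only by the gradients still unknown at time t.\<close>
lemma delayed_dual_averaging_linear_regret:
  fixes N :: "'a::euclidean_space \<Rightarrow> real" and g x :: "nat \<Rightarrow> 'a" and S :: "nat \<Rightarrow> nat set"
  assumes N: "is_norm N" and X: "convex X" "closed X"
    and H: "strongly_convex_real_on X N 1 H" "\<And>w. w \<in> X \<Longrightarrow> 0 \<le> H w" "lower_semicontinuous_on X H"
    and S: "\<And>t. S t \<subseteq> {1..<t}"
    and eta_pos: "\<And>t. t \<in> {1..T} \<Longrightarrow> \<eta> t > 0"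
    and eta_mono: "\<And>s t. s \<in> {1..T} \<Longrightarrow> t \<in> {1..T} \<Longrightarrow> s \<le> t \<Longrightarrow> \<eta> t \<le> \<eta> s"
    and x: "\<And>t. t \<in> {1..T} \<Longrightarrow>
      is_arg_min (dual_averaging_objective (\<Sum>s\<in>S t. g s) H (\<eta> t)) (\<lambda>w. w \<in> X) (x t)"
    and T: "T \<ge> 1" and p: "p \<in> X"
  shows "(\<Sum>t=1..T. g t \<bullet> (x t - p)) \<le> H p / \<eta> T
    + 1/2 * (\<Sum>t=1..T. \<eta> t * ((dual_norm N (g t))\<^sup>2
        + 2 * dual_norm N (g t) * (\<Sum>s\<in>{1..<t} - S t. dual_norm N (g s))))"
proof -
  define e where "e t = \<eta> (min t T)" for t
  define U where "U t = (\<Sum>s\<in>{1..<t} - S t. dual_norm N (g s))" for t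
  have "\<exists>y. is_arg_min (dual_averaging_objective (\<Sum>s=1..<t. g s) H (e t)) (\<lambda>w. w \<in> X) y"
    if "t \<in> {1..Suc T}" for t
  proof -
    define t' where "t' = min t T"
    have t': "t' \<in> {1..T}" using that T by (auto simp: t'_def)
    have "(\<lambda>w. ((\<Sum>s=1..<t. g s) - (\<Sum>s\<in>S t'. g s)) \<bullet> w
        + dual_averaging_objective (\<Sum>s\<in>S t'. g s) H (\<eta> t') w)
      = dual_averaging_objective (\<Sum>s=1..<t. g s) H (e t)"
      by (simp add: dual_averaging_objective_add_inner e_def t'_def)
    moreover have "1 / \<eta> t' > 0" using eta_pos[OF t'] by simp
    ultimately show ?thesis
      using strongly_convex_arg_min_perturb_exists[OF N X
          strongly_convex_dual_averaging_objective[OF H(1) eta_pos[OF t']] _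
          lower_semicontinuous_dual_averaging_objective[OF H(3) eta_pos[OF t']] x[OF t']]
      by metis
  qed
  then obtain y where y: "\<And>t. t \<in> {1..Suc T} \<Longrightarrow>
      is_arg_min (dual_averaging_objective (\<Sum>s=1..<t. g s) H (e t)) (\<lambda>w. w \<in> X) (y t)"
    by metis
  have "(\<Sum>t=1..T. g t \<bullet> (y t - p)) \<le> H p / e (Suc T) + (\<Sum>t=1..T. e t * (dual_norm N (g t))\<^sup>2 / 2)"
    using T by (intro dual_averaging_regret[OF N X(1) H(1,2) _ _ y p]) (auto simp: e_def eta_pos eta_mono)
  also have "\<dots> = H p / \<eta> T + (\<Sum>t=1..T. \<eta> t * (dual_norm N (g t))\<^sup>2 / 2)"
    by (simp add: e_def)
  finally have leader: "(\<Sum>t=1..T. g t \<bullet> (y t - p)) \<le> \<dots>" .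
  have delay: "g t \<bullet> (x t - y t) \<le> \<eta> t * (dual_norm N (g t) * U t)" if t: "t \<in> {1..T}" for t
  proof -
    have "N (x t - y t) \<le> \<eta> t * U t"
      unfolding U_def using t S y[of t] e_def
      by (intro dual_averaging_arg_min_delay_dist[OF N X(1) H(1) eta_pos[OF t] _ _ x[OF t]]) auto
    then have "dual_norm N (g t) * N (x t - y t) \<le> dual_norm N (g t) * (\<eta> t * U t)"
      by (rule mult_left_mono) (rule dual_norm_nonneg[OF N])
    then show ?thesis using dual_norm_inner_le[OF N, of "g t" "x t - y t"] by (simp add: algebra_simps)
  qed
  have "(\<Sum>t=1..T. g t \<bullet> (x t - p)) = (\<Sum>t=1..T. g t \<bullet> (x t - y t)) + (\<Sum>t=1..T. g t \<bullet> (y t - p))"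
    by (simp add: inner_diff_right sum_subtractf)
  also have "\<dots> \<le> (\<Sum>t=1..T. \<eta> t * (dual_norm N (g t) * U t))
      + (H p / \<eta> T + (\<Sum>t=1..T. \<eta> t * (dual_norm N (g t))\<^sup>2 / 2))"
    using delay leader by (intro add_mono sum_mono) auto
  also have "\<dots> = H p / \<eta> T + 1/2 * (\<Sum>t=1..T. \<eta> t * ((dual_norm N (g t))\<^sup>2 + 2 * dual_norm N (g t) * U t))"
    by (simp add: sum_distrib_left sum.distrib[symmetric] algebra_simps)
  finally show ?thesis unfolding U_def .
qed

section \<open>Extended-real regularizers and losses\<close>

lemma regularizer_finite:
  assumes "regularizer X N h" "w \<in> X"
  shows "h w = ereal (real_of_ereal (h w))"
proof -
  have "h w < \<infinity>" "h w \<ge> 0" using assms unfolding regularizer_def edom_def by auto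
  then show ?thesis by (cases "h w") auto
qed

lemma regularizer_real_strongly_convex:
  assumes "convex X" "regularizer X N h"
  shows "strongly_convex_real_on X N 1 (\<lambda>w. real_of_ereal (h w))"
  unfolding strongly_convex_real_on_def
proof (intro ballI allI impI)
  fix x y and u :: real assume xy: "x \<in> X" "y \<in> X" and u: "0 \<le> u \<and> u \<le> 1"
  define m where "m = u *\<^sub>R x + (1 - u) *\<^sub>R y"
  have "m \<in> X" using convexD[OF assms(1) xy, of u "1 - u"] u by (auto simp: m_def)
  then obtain a b c where abc: "h x = ereal a" "h y = ereal b" "h m = ereal c"
    using regularizer_finite[OF assms(2)] xy by metis
  have "h m \<le> ereal u * h x + ereal (1 - u) * h y - ereal (u * (1 - u) / 2 * (N (x - y))\<^sup>2)"
    using assms(2) xy u unfolding regularizer_def strongly_convex_on_def m_def by blast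
  then show "real_of_ereal (h m) \<le> u * real_of_ereal (h x)
      + (1 - u) * real_of_ereal (h y) - 1 / 2 * u * (1 - u) * (N (x - y))\<^sup>2"
    unfolding abc by simp
qed

lemma regularizer_real_lower_semicontinuous:
  assumes "regularizer X N h"
  shows "lower_semicontinuous_on X (\<lambda>w. real_of_ereal (h w))"
  unfolding lower_semicontinuous_on_def
proof (intro ballI allI impI)
  fix z r assume z: "z \<in> X" and "r < real_of_ereal (h z)"
  then have "ereal r < h z" using regularizer_finite[OF assms z] by (metis less_ereal.simps(1))
  moreover have "h z \<le> Liminf (at z) h"
    using assms unfolding regularizer_def lower_semicont_def by blast
  ultimately have "\<forall>\<^sub>F y in at z. ereal r < h y" using le_Liminf_iff by blast
  then show "\<forall>\<^sub>F y in at z within X. r < real_of_ereal (h y)"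
    unfolding eventually_at_filter
    by (rule eventually_mono) (metis UNIV_I less_ereal.simps(1) regularizer_finite[OF assms])
qed

lemma subdiff_regret_le_linear:
  assumes "\<And>t. t \<in> A \<Longrightarrow> g t \<in> subdiff (f t) (x t)" "\<And>t. t \<in> A \<Longrightarrow> subdiff (f t) p \<noteq> {}"
  shows "(\<Sum>t\<in>A. f t (x t)) - (\<Sum>t\<in>A. f t p) \<le> ereal (\<Sum>t\<in>A. g t \<bullet> (x t - p))"
proof -
  define a where "a t = real_of_ereal (f t (x t))" for t
  define b where "b t = real_of_ereal (f t p)" for t
  have ab: "f t (x t) = ereal (a t)" "f t p = ereal (b t)" "a t - b t \<le> g t \<bullet> (x t - p)" if t: "t \<in> A" for t
  proof -
    have "\<bar>f t (x t)\<bar> \<noteq> \<infinity>" "f t (x t) + ereal (g t \<bullet> (p - x t)) \<le> f t p" "\<bar>f t p\<bar> \<noteq> \<infinity>"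
      using assms[OF t] unfolding subdiff_def by auto
    then show "f t (x t) = ereal (a t)" "f t p = ereal (b t)" "a t - b t \<le> g t \<bullet> (x t - p)"
      by (auto simp: a_def b_def inner_diff_right)
  qed
  have "(\<Sum>t\<in>A. f t (x t)) - (\<Sum>t\<in>A. f t p) = ereal (\<Sum>t\<in>A. a t - b t)"
    using ab by (simp add: sum_subtractf)
  also have "\<dots> \<le> ereal (\<Sum>t\<in>A. g t \<bullet> (x t - p))" using ab by (simp add: sum_mono)
  finally show ?thesis .
qed

theorem theorem1:
  fixes N :: "'a::euclidean_space \<Rightarrow> real"
    and X :: "'a set"
    and h :: "'a \<Rightarrow> ereal"
    and f :: "nat \<Rightarrow> 'a \<Rightarrow> ereal"
    and ag :: "nat \<Rightarrow> 'agent"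
    and S :: "'agent \<Rightarrow> nat \<Rightarrow> nat set"
    and x g :: "nat \<Rightarrow> 'a"
    and \<eta> :: "nat \<Rightarrow> real"
    and T :: nat
    and p :: 'a
  assumes norm: "is_norm N"
    and X: "closed X" "convex X"
    and reg: "regularizer X N h"
    and f_ext: "\<And>t. t \<in> {1..T} \<Longrightarrow> ext_valued (f t)"
    and f_convex: "\<And>t. t \<in> {1..T} \<Longrightarrow> econvex (f t)"
    and f_dom: "\<And>t. t \<in> {1..T} \<Longrightarrow> X \<subseteq> {y. subdiff (f t) y \<noteq> {}}"
    and S_past: "\<And>a t. S a t \<subseteq> {1..<t}"
    and S_mono: "\<And>a t. S a t \<subseteq> S a (Suc t)"
    and eta_pos: "\<And>t. t \<in> {1..T} \<Longrightarrow> \<eta> t > 0"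
    and eta_mono: "\<And>s t. s \<in> {1..T} \<Longrightarrow> t \<in> {1..T} \<Longrightarrow> s \<le> t \<Longrightarrow> \<eta> t \<le> \<eta> s"
    and x_in: "\<And>t. t \<in> {1..T} \<Longrightarrow> x t \<in> X"
    and x_dda: "\<And>t y. t \<in> {1..T} \<Longrightarrow> y \<in> X \<Longrightarrow>
        ereal (\<Sum>s\<in>S (ag t) t. g s \<bullet> x t) + h (x t) / ereal (\<eta> t)
          \<le> ereal (\<Sum>s\<in>S (ag t) t. g s \<bullet> y) + h y / ereal (\<eta> t)"
    and g_sub: "\<And>t. t \<in> {1..T} \<Longrightarrow> g t \<in> subdiff (f t) (x t)"
    and T: "T \<ge> 1"
    and p: "p \<in> X"
  shows "(\<Sum>t=1..T. f t (x t)) - (\<Sum>t=1..T. f t p)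
     \<le> h p / ereal (\<eta> T)
        + ereal (1/2 * (\<Sum>t=1..T. \<eta> t * ((dual_norm N (g t))\<^sup>2
             + 2 * dual_norm N (g t) * (\<Sum>s\<in>{1..<t} - S (ag t) t. dual_norm N (g s)))))"
proof -
  define H where "H w = real_of_ereal (h w)" for w
  have hH: "h w = ereal (H w)" if "w \<in> X" for w
    using regularizer_finite[OF reg that] by (simp add: H_def)
  have H_nonneg: "0 \<le> H w" for w
    using reg by (simp add: H_def regularizer_def real_of_ereal_pos)
  have x_min: "is_arg_min (dual_averaging_objective (\<Sum>s\<in>S (ag t) t. g s) H (\<eta> t)) (\<lambda>w. w \<in> X) (x t)"
    if t: "t \<in> {1..T}" for t
    using x_in[OF t] x_dda[OF t] eta_pos[OF t] hH x_in[OF t]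
    by (auto simp: is_arg_min_linorder dual_averaging_objective_def inner_sum_left)
  let ?B = "1/2 * (\<Sum>t=1..T. \<eta> t * ((dual_norm N (g t))\<^sup>2
             + 2 * dual_norm N (g t) * (\<Sum>s\<in>{1..<t} - S (ag t) t. dual_norm N (g s))))"
  have "(\<Sum>t=1..T. f t (x t)) - (\<Sum>t=1..T. f t p) \<le> ereal (\<Sum>t=1..T. g t \<bullet> (x t - p))"
    using g_sub f_dom p by (intro subdiff_regret_le_linear) auto
  also have "\<dots> \<le> ereal (H p / \<eta> T + ?B)"
    using delayed_dual_averaging_linear_regret[OF norm X(2,1), of H "\<lambda>t. S (ag t) t"]
      regularizer_real_strongly_convex[OF X(2) reg] regularizer_real_lower_semicontinuous[OF reg]
      H_nonneg S_past eta_pos eta_mono x_min T p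
    unfolding H_def by simp
  also have "\<dots> = h p / ereal (\<eta> T) + ereal ?B"
    using hH[OF p] eta_pos[of T] T by simp
  finally show ?thesis .
qed

end
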